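(* Let $R$ be a finite commutative Frobenius ring of characteristic $2$, let $G=\langle x\rangle$ be a finite cyclic group of order $n$ with elements listed as $g_i=x^{i-1}$ ($i=1,\dots,n$), let $v_1\neq v_2$ be elements of $RG$, and let $A$ be an $n\times n$ reverse circulant matrix over $R$. Let $C_\sigma$ be the code over $R$ generated by $$M(\sigma)=\left(\, I_{2n} \;\middle|\; \begin{matrix} \sigma(v_1) & \sigma(v_2)+A\\ \sigma(v_2)+A & \sigma(v_1)\end{matrix}\,\right).$$ Then $C_\sigma$ is a self-dual code of length $4n$ if and only if $\sigma((v_1+v_2)(v_1+v_2)^* )+A^2=I_n$ and $v_1v_2^*=v_2v_1^*$.
   Context: For $v=\sum_{g\in G}\alpha_g g\in RG$, $\sigma(v)$ is the $n\times n$ matrix over $R$ whose $(i,j)$ entry is $\alpha_{g_i^{-1}g_j}$ (so for $v=\sum_{i=0}^{n-1}\alpha_i x^i$, $\sigma(v)$ is the circulant matrix with first row $(\alpha_0,\dots,\alpha_{n-1})$). The canonical involution is $v^*=\sum_g\alpha_g g^{-1}$. An $n\times n$ matrix $(a_{ij})$ is reverse circulant if $a_{ij}$ depends only on $(i+j)\bmod n$. The code generated by a matrix is the $R$-submodule spanned by its rows; it is self-dual if it equals its dual with respect to the Euclidean inner product $\langle x,y\rangle=\sum_i x_iy_i$. *)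

theory Defs
  imports Complex_Main "Jordan_Normal_Form.Matrix"
begin

(* Frobenius ring (finite commutative): existence of a generating character,
   i.e. an additive character chi : (R,+) -> C^* whose kernel contains no
   nonzero ideal (Wood's characterization, standard in coding theory). *)
definition is_ideal :: "'a::comm_ring_1 set \<Rightarrow> bool" where
  "is_ideal I \<longleftrightarrow> 0 \<in> I \<and> (\<forall>x\<in>I. \<forall>y\<in>I. x + y \<in> I) \<and> (\<forall>r. \<forall>x\<in>I. r * x \<in> I)"

definition generating_character :: "('a::comm_ring_1 \<Rightarrow> complex) \<Rightarrow> bool" where
  "generating_character chi \<longleftrightarrow>
     (\<forall>a b. chi (a + b) = chi a * chi b) \<and>
     (\<forall>I::'a set. is_ideal I \<longrightarrow> I \<noteq> {0} \<longrightarrow> (\<exists>x\<in>I. chi x \<noteq> 1))"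

definition frobenius_ring :: "'a::comm_ring_1 itself \<Rightarrow> bool" where
  "frobenius_ring _ \<longleftrightarrow> (\<exists>chi :: 'a \<Rightarrow> complex. generating_character chi)"

(* Group ring RG for G = <x> cyclic of order n; v = sum_i v$i x^i
   is represented by its coefficient vector of dimension n. *)
definition gr_mult :: "nat \<Rightarrow> 'a::comm_ring_1 vec \<Rightarrow> 'a vec \<Rightarrow> 'a vec" where
  "gr_mult n u v = vec n (\<lambda>k. \<Sum>i<n. \<Sum>j<n. if (i + j) mod n = k then u $ i * v $ j else 0)"

(* canonical involution v* = sum_g alpha_g g^{-1} *)
definition gr_star :: "nat \<Rightarrow> 'a vec \<Rightarrow> 'a vec" where
  "gr_star n v = vec n (\<lambda>i. v $ ((n - i) mod n))"

(* sigma(v): (i,j) entry alpha_{g_i^{-1} g_j} = alpha_{x^{(j-i) mod n}} (0-indexed) *)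
definition sigma_mat :: "nat \<Rightarrow> 'a vec \<Rightarrow> 'a mat" where
  "sigma_mat n v = mat n n (\<lambda>(i, j). v $ ((j + n - i) mod n))"

definition reverse_circulant :: "nat \<Rightarrow> 'a mat \<Rightarrow> bool" where
  "reverse_circulant n A \<longleftrightarrow> A \<in> carrier_mat n n \<and>
     (\<forall>i j k l. i < n \<longrightarrow> j < n \<longrightarrow> k < n \<longrightarrow> l < n \<longrightarrow>
        (i + j) mod n = (k + l) mod n \<longrightarrow> A $$ (i, j) = A $$ (k, l))"

definition hconcat :: "'a mat \<Rightarrow> 'a mat \<Rightarrow> 'a mat" where
  "hconcat A B = mat (dim_row A) (dim_col A + dim_col B)
     (\<lambda>(i, j). if j < dim_col A then A $$ (i, j) else B $$ (i, j - dim_col A))"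

definition code_gen :: "'a::comm_ring_1 mat \<Rightarrow> 'a vec set" where
  "code_gen M = {vec (dim_col M) (\<lambda>j. \<Sum>i<dim_row M. c i * M $$ (i, j)) | c. True}"

definition dual_code :: "nat \<Rightarrow> 'a::comm_ring_1 vec set \<Rightarrow> 'a vec set" where
  "dual_code N C = {x \<in> carrier_vec N. \<forall>y\<in>C. x \<bullet> y = 0}"

definition self_dual :: "nat \<Rightarrow> 'a::comm_ring_1 vec set \<Rightarrow> bool" where
  "self_dual N C \<longleftrightarrow> C \<subseteq> carrier_vec N \<and> C = dual_code N C"

definition M_sigma :: "nat \<Rightarrow> 'a::comm_ring_1 vec \<Rightarrow> 'a vec \<Rightarrow> 'a mat \<Rightarrow> 'a mat" where
  "M_sigma n v1 v2 A = hconcat (1\<^sub>m (2 * n))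
     (four_block_mat (sigma_mat n v1) (sigma_mat n v2 + A)
                     (sigma_mat n v2 + A) (sigma_mat n v1))"

end

theory Submission
  imports Defs "Jordan_Normal_Form.Determinant"
begin

(* The circulant representation sigma is an injective ring homomorphism from RG to n x n
   matrices which turns the involution * into transposition, and a reverse circulant (hence
   symmetric) A satisfies sigma(v) A = A sigma(v)^T.  Over any commutative ring the code
   generated by (I | B), B square, is self-dual iff B B^T = -I: its dual consists of the
   (x1, x2) with x1 + B x2 = 0, and B B^T = -I forces B^T B = -I via the adjugate.
   For B = [[S1, S2 + A], [S2 + A, S1]] this splits into S1 S1^T + (S2 + A)(S2 + A)^T = -I and
   S1 (S2 + A)^T + (S2 + A) S1^T = 0; in characteristic 2 the cross terms S A + A S^T cancel,
   leaving S1 S1^T + S2 S2^T + A^2 = I and S1 S2^T = S2 S1^T, which is the claim. *)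

section \<open>Self-dual codes generated by (I | B)\<close>

lemma mat_mult_left_right_inverse_comm_ring:
  fixes A B :: "'a::comm_ring_1 mat"
  assumes A: "A \<in> carrier_mat n n" and B: "B \<in> carrier_mat n n" and AB: "A * B = 1\<^sub>m n"
  shows "B * A = 1\<^sub>m n"
proof -
  have det: "det B * det A = 1"
    using det_mult[OF A B] AB by (simp add: mult.commute)
  have adj: "adj_mat A \<in> carrier_mat n n" "adj_mat A * A = det A \<cdot>\<^sub>m 1\<^sub>m n"
    using adj_mat[OF A] by auto
  have "adj_mat A = (adj_mat A * A) * B"
    using A B adj(1) AB by (simp add: assoc_mult_mat[OF adj(1) A B])
  also have "\<dots> = det A \<cdot>\<^sub>m B"
    using B by (simp add: adj(2) mult_smult_assoc_mat[of _ n n _ n])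
  finally have scaled: "det A \<cdot>\<^sub>m (B * A) = det A \<cdot>\<^sub>m 1\<^sub>m n"
    using A B adj(2) by (simp add: mult_smult_assoc_mat[of _ n n _ n, symmetric])
  have "(B * A) $$ (i, j) = 1\<^sub>m n $$ (i, j)" if "i < n" "j < n" for i j
  proof -
    have "(B * A) $$ (i, j) = det B * (det A \<cdot>\<^sub>m (B * A)) $$ (i, j)"
      using that A B det by (simp add: mult.assoc[symmetric])
    also have "\<dots> = det B * (det A \<cdot>\<^sub>m 1\<^sub>m n) $$ (i, j)"
      by (simp only: scaled)
    also have "\<dots> = 1\<^sub>m n $$ (i, j)"
      using that det by (simp add: mult.assoc[symmetric])
    finally show ?thesis .
  qed
  then show ?thesis
    using A B by (intro eq_matI) auto
qed

lemma zero_vec_if_orthogonal_to_all: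
  fixes v :: "'a::semiring_1 vec"
  assumes v: "v \<in> carrier_vec n" and orth: "\<And>c. c \<in> carrier_vec n \<Longrightarrow> c \<bullet> v = 0"
  shows "v = 0\<^sub>v n"
proof (rule eq_vecI)
  show "v $ i = 0\<^sub>v n $ i" if "i < dim_vec (0\<^sub>v n :: 'a vec)" for i
    using that v orth[of "unit_vec n i"] by simp
qed (use v in simp)

lemma unit_vec_scalar_prod_mult_mat_vec:
  fixes X :: "'a::semiring_1 mat"
  assumes "X \<in> carrier_mat n m" "i < n" "j < m"
  shows "unit_vec n i \<bullet> (X *\<^sub>v unit_vec m j) = X $$ (i, j)"
  using assms by simp

lemma carrier_vec_append_cases:
  assumes "x \<in> carrier_vec (n1 + n2)"
  obtains x1 x2 where "x1 \<in> carrier_vec n1" "x2 \<in> carrier_vec n2" "x = x1 @\<^sub>v x2"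
  using vec_first_last_append[OF assms] vec_first_carrier vec_last_carrier by metis

lemma code_gen_eq_transpose_image:
  "code_gen M = (\<lambda>c. transpose_mat M *\<^sub>v c) ` carrier_vec (dim_row M)"
proof -
  have row_comb: "vec (dim_col M) (\<lambda>j. \<Sum>i<dim_row M. c i * M $$ (i, j))
      = transpose_mat M *\<^sub>v vec (dim_row M) c" for c
  proof (rule eq_vecI)
    fix j assume "j < dim_vec (transpose_mat M *\<^sub>v vec (dim_row M) c)"
    then have "(transpose_mat M *\<^sub>v vec (dim_row M) c) $ j = (\<Sum>i\<in>{0..<dim_row M}. M $$ (i, j) * c i)"
      by (simp add: scalar_prod_def)
    then show "vec (dim_col M) (\<lambda>j. \<Sum>i<dim_row M. c i * M $$ (i, j)) $ j
        = (transpose_mat M *\<^sub>v vec (dim_row M) c) $ j"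
      using \<open>j < _\<close> by (simp add: lessThan_atLeast0 mult.commute)
  qed simp
  show ?thesis
  proof (intro equalityI subsetI)
    fix x assume "x \<in> code_gen M"
    then obtain c where "x = vec (dim_col M) (\<lambda>j. \<Sum>i<dim_row M. c i * M $$ (i, j))"
      unfolding code_gen_def by blast
    then show "x \<in> (\<lambda>c. transpose_mat M *\<^sub>v c) ` carrier_vec (dim_row M)"
      unfolding row_comb by (intro image_eqI) auto
  next
    fix x assume "x \<in> (\<lambda>c. transpose_mat M *\<^sub>v c) ` carrier_vec (dim_row M)"
    then obtain c where x: "x = transpose_mat M *\<^sub>v c" and c: "c \<in> carrier_vec (dim_row M)"
      by (rule imageE)
    have "c = vec (dim_row M) (\<lambda>i. c $ i)"
      using c by (intro eq_vecI) auto
    then have "x = vec (dim_col M) (\<lambda>j. \<Sum>i<dim_row M. c $ i * M $$ (i, j))"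
      unfolding x row_comb by simp
    then show "x \<in> code_gen M"
      unfolding code_gen_def by blast
  qed
qed

lemma transpose_hconcat:
  assumes "A \<in> carrier_mat nr nc1" "B \<in> carrier_mat nr nc2"
  shows "transpose_mat (hconcat A B) = transpose_mat A @\<^sub>r transpose_mat B"
  using assms by (intro eq_matI) (auto simp: hconcat_def append_rows_def)

lemma code_gen_hconcat_one:
  assumes "B \<in> carrier_mat N m"
  shows "code_gen (hconcat (1\<^sub>m N) B) = (\<lambda>c. c @\<^sub>v (transpose_mat B *\<^sub>v c)) ` carrier_vec N"
proof -
  have "transpose_mat (hconcat (1\<^sub>m N) B) *\<^sub>v c = c @\<^sub>v (transpose_mat B *\<^sub>v c)"
    if "c \<in> carrier_vec N" for c
    using assms that
    by (simp add: transpose_hconcat[OF one_carrier_mat assms] mat_mult_append[OF one_carrier_mat _ that])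
  moreover have "dim_row (hconcat (1\<^sub>m N) B) = N"
    by (simp add: hconcat_def)
  ultimately show ?thesis
    unfolding code_gen_eq_transpose_image by (intro image_cong) auto
qed

lemma scalar_prod_append_transpose_mult:
  fixes B :: "'a::comm_semiring_0 mat"
  assumes B: "B \<in> carrier_mat N m" and c: "c \<in> carrier_vec N" and d: "d \<in> carrier_vec N"
  shows "(c @\<^sub>v (transpose_mat B *\<^sub>v c)) \<bullet> (d @\<^sub>v (transpose_mat B *\<^sub>v d))
    = c \<bullet> d + c \<bullet> ((B * transpose_mat B) *\<^sub>v d)"
proof -
  have Bt: "transpose_mat B \<in> carrier_mat m N"
    using B by auto
  have "(c @\<^sub>v (transpose_mat B *\<^sub>v c)) \<bullet> (d @\<^sub>v (transpose_mat B *\<^sub>v d))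
      = c \<bullet> d + (transpose_mat B *\<^sub>v c) \<bullet> (transpose_mat B *\<^sub>v d)"
    using Bt c d by (intro scalar_prod_append[of _ N _ m]) auto
  also have "\<dots> = c \<bullet> d + c \<bullet> (B *\<^sub>v (transpose_mat B *\<^sub>v d))"
    using Bt c d by (simp add: transpose_vec_mult_scalar[OF B])
  also have "\<dots> = c \<bullet> d + c \<bullet> ((B * transpose_mat B) *\<^sub>v d)"
    by (simp add: assoc_mult_mat_vec[OF B Bt d])
  finally show ?thesis .
qed

lemma hconcat_one_self_orthogonal_iff:
  fixes B :: "'a::comm_ring_1 mat"
  assumes B: "B \<in> carrier_mat N m"
  defines "C \<equiv> code_gen (hconcat (1\<^sub>m N) B)"
  shows "C \<subseteq> dual_code (N + m) C \<longleftrightarrow> B * transpose_mat B = - 1\<^sub>m N"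
proof
  assume isotropic: "C \<subseteq> dual_code (N + m) C"
  have "1\<^sub>m N $$ (i, j) + (B * transpose_mat B) $$ (i, j) = 0" if "i < N" "j < N" for i j
  proof -
    let ?e = "\<lambda>k. unit_vec N k @\<^sub>v (transpose_mat B *\<^sub>v unit_vec N k)"
    have "?e i \<in> dual_code (N + m) C" "?e j \<in> C"
      using isotropic unfolding C_def code_gen_hconcat_one[OF B] by auto
    then have orth: "?e i \<bullet> ?e j = 0"
      unfolding dual_code_def by blast
    have "unit_vec N i \<bullet> unit_vec N j = (unit_vec N j $ i :: 'a)"
      using that(1) by (rule scalar_prod_left_unit[OF unit_vec_carrier])
    also have "\<dots> = 1\<^sub>m N $$ (i, j)"
      using that by auto
    finally have unit: "unit_vec N i \<bullet> unit_vec N j = (1\<^sub>m N $$ (i, j) :: 'a)" .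
    have entry: "unit_vec N i \<bullet> ((B * transpose_mat B) *\<^sub>v unit_vec N j) = (B * transpose_mat B) $$ (i, j)"
      using that B by (intro unit_vec_scalar_prod_mult_mat_vec[of _ N N]) auto
    show ?thesis
      using orth unfolding scalar_prod_append_transpose_mult[OF B unit_vec_carrier unit_vec_carrier] unit entry .
  qed
  then show "B * transpose_mat B = - 1\<^sub>m N"
    using B by (intro eq_matI) (auto simp: add_eq_0_iff2)
next
  assume "B * transpose_mat B = - 1\<^sub>m N"
  then have "c \<bullet> d + c \<bullet> ((B * transpose_mat B) *\<^sub>v d) = 0"
    if "c \<in> carrier_vec N" "d \<in> carrier_vec N" for c d
    using that by simp
  then show "C \<subseteq> dual_code (N + m) C"
    using B scalar_prod_append_transpose_mult[OF B]
    unfolding C_def code_gen_hconcat_one[OF B] dual_code_def by auto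
qed

lemma append_mem_dual_code_hconcat_one_iff:
  fixes B :: "'a::comm_ring_1 mat"
  assumes B: "B \<in> carrier_mat N m" and x1: "x1 \<in> carrier_vec N" and x2: "x2 \<in> carrier_vec m"
  shows "x1 @\<^sub>v x2 \<in> dual_code (N + m) (code_gen (hconcat (1\<^sub>m N) B)) \<longleftrightarrow> x1 + B *\<^sub>v x2 = 0\<^sub>v N"
proof -
  have "(x1 @\<^sub>v x2) \<bullet> (c @\<^sub>v (transpose_mat B *\<^sub>v c)) = c \<bullet> (x1 + B *\<^sub>v x2)"
    if c: "c \<in> carrier_vec N" for c
  proof -
    have "x2 \<bullet> (transpose_mat B *\<^sub>v c) = c \<bullet> (B *\<^sub>v x2)"
      using B c x2 by (simp add: comm_scalar_prod[of x2 m] transpose_vec_mult_scalar[OF B])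
    then show ?thesis
      using B c x1 x2 by (simp add: scalar_prod_append[of _ N _ m] scalar_prod_add_distrib[of _ N]
          comm_scalar_prod[of x1 N])
  qed
  then have "x1 @\<^sub>v x2 \<in> dual_code (N + m) (code_gen (hconcat (1\<^sub>m N) B))
      \<longleftrightarrow> (\<forall>c \<in> carrier_vec N. c \<bullet> (x1 + B *\<^sub>v x2) = 0)"
    using x1 x2 unfolding code_gen_hconcat_one[OF B] dual_code_def by auto
  also have "\<dots> \<longleftrightarrow> x1 + B *\<^sub>v x2 = 0\<^sub>v N"
    using B x1 x2 zero_vec_if_orthogonal_to_all[of "x1 + B *\<^sub>v x2" N] by auto
  finally show ?thesis .
qed

lemma dual_code_hconcat_one_subset:
  fixes B :: "'a::comm_ring_1 mat"
  assumes B: "B \<in> carrier_mat N N" and BBt: "B * transpose_mat B = - 1\<^sub>m N"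
  shows "dual_code (N + N) (code_gen (hconcat (1\<^sub>m N) B)) \<subseteq> code_gen (hconcat (1\<^sub>m N) B)"
proof
  fix x assume x_dual: "x \<in> dual_code (N + N) (code_gen (hconcat (1\<^sub>m N) B))"
  then have "x \<in> carrier_vec (N + N)"
    unfolding dual_code_def by blast
  then obtain x1 x2 where x12: "x1 \<in> carrier_vec N" "x2 \<in> carrier_vec N" and x: "x = x1 @\<^sub>v x2"
    by (rule carrier_vec_append_cases)
  have "B * (- transpose_mat B) = 1\<^sub>m N"
    using B BBt by simp
  then have BtB: "- transpose_mat B * B = 1\<^sub>m N"
    using B by (intro mat_mult_left_right_inverse_comm_ring[of B N]) auto
  have sum_zero: "x1 + B *\<^sub>v x2 = 0\<^sub>v N"
    using append_mem_dual_code_hconcat_one_iff[OF B x12] x_dual unfolding x by simp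
  have "x1 = (- B) *\<^sub>v x2"
  proof (rule eq_vecI)
    fix i assume "i < dim_vec ((- B) *\<^sub>v x2)"
    then have i: "i < N"
      using B by simp
    have "x1 $ i + (B *\<^sub>v x2) $ i = 0"
      using arg_cong[OF sum_zero, of "\<lambda>v. v $ i"] i B x12 by simp
    then show "x1 $ i = ((- B) *\<^sub>v x2) $ i"
      using i B x12 by (simp add: add_eq_0_iff2)
  qed (use B x12 in simp)
  then have "transpose_mat B *\<^sub>v x1 = (transpose_mat B * (- B)) *\<^sub>v x2"
    using B x12 by (simp only: assoc_mult_mat_vec[of _ N N _ N] transpose_carrier_mat uminus_carrier_iff_mat)
  also have "transpose_mat B * (- B) = 1\<^sub>m N"
    using BtB by simp
  finally have "x2 = transpose_mat B *\<^sub>v x1"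
    using x12 by simp
  then show "x \<in> code_gen (hconcat (1\<^sub>m N) B)"
    unfolding code_gen_hconcat_one[OF B] x using x12 by (intro image_eqI[where x = x1]) simp_all
qed

lemma self_dual_hconcat_one_iff:
  fixes B :: "'a::comm_ring_1 mat"
  assumes B: "B \<in> carrier_mat N N"
  shows "self_dual (N + N) (code_gen (hconcat (1\<^sub>m N) B)) \<longleftrightarrow> B * transpose_mat B = - 1\<^sub>m N"
proof -
  have "code_gen (hconcat (1\<^sub>m N) B) \<subseteq> carrier_vec (N + N)"
    unfolding code_gen_hconcat_one[OF B] using B by auto
  then show ?thesis
    using hconcat_one_self_orthogonal_iff[OF B] dual_code_hconcat_one_subset[OF B]
    unfolding self_dual_def by blast
qed

section \<open>Circulant matrices of the cyclic group ring\<close>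

(* The coefficient of x^t in v for an arbitrary integer exponent t; the entries of sigma_mat,
   gr_mult and gr_star are such coefficients at differences of exponents. *)
definition gr_coeff :: "nat \<Rightarrow> 'a vec \<Rightarrow> int \<Rightarrow> 'a" where
  "gr_coeff n v t = v $ nat (t mod int n)"

lemma gr_coeff_mod_cong: "s mod int n = t mod int n \<Longrightarrow> gr_coeff n v s = gr_coeff n v t"
  unfolding gr_coeff_def by simp

lemma gr_coeff_of_nat [simp]: "k < n \<Longrightarrow> gr_coeff n v (int k) = v $ k"
  unfolding gr_coeff_def by (simp add: zmod_int)

lemma sum_lessThan_periodic_shift:
  fixes f :: "int \<Rightarrow> 'a::comm_monoid_add"
  assumes periodic: "\<And>t. f (t mod int n) = f t"
  shows "(\<Sum>k<n. f (int k + c)) = (\<Sum>k<n. f (int k))"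
proof (cases "n = 0")
  case False
  have "(\<Sum>k<n. f (int k + c)) = (\<Sum>k<n. f (int (nat ((int k + c) mod int n))))"
    using False by (simp add: periodic)
  also have "\<dots> = (\<Sum>k<n. f (int k))"
    by (rule sum.reindex_bij_witness[where i = "\<lambda>k. nat ((int k - c) mod int n)"
          and j = "\<lambda>k. nat ((int k + c) mod int n)"])
      (use False in \<open>auto simp: nat_less_iff mod_simps\<close>)
  finally show ?thesis .
qed simp

lemma sigma_mat_dim [simp]: "dim_row (sigma_mat n v) = n" "dim_col (sigma_mat n v) = n"
  unfolding sigma_mat_def by simp_all

lemma sigma_mat_carrier [simp]: "sigma_mat n v \<in> carrier_mat n n"
  unfolding sigma_mat_def by simp

lemma sigma_mat_index:
  assumes "i < n" "j < n"
  shows "sigma_mat n v $$ (i, j) = gr_coeff n v (int j - int i)"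
proof -
  have "int ((j + n - i) mod n) = int (j + n - i) mod int n"
    by (simp add: zmod_int)
  also have "int (j + n - i) = (int j - int i) + int n"
    using assms by simp
  finally have "(j + n - i) mod n = nat ((int j - int i) mod int n)"
    by simp
  then show ?thesis
    using assms unfolding sigma_mat_def gr_coeff_def by simp
qed

lemma gr_mult_carrier [simp]: "gr_mult n u v \<in> carrier_vec n"
  unfolding gr_mult_def by simp

lemma gr_mult_index:
  assumes "k < n"
  shows "gr_mult n u v $ k = (\<Sum>i<n. u $ i * gr_coeff n v (int k - int i))"
proof -
  have row_sum: "(\<Sum>j<n. if (i + j) mod n = k then u $ i * v $ j else 0) = u $ i * gr_coeff n v (int k - int i)"
    if "i < n" for i
  proof -
    define j0 where "j0 = nat ((int k - int i) mod int n)"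
    have "j0 < n"
      using assms unfolding j0_def by (simp add: nat_less_iff)
    have "(i + j) mod n = k \<longleftrightarrow> j = j0" if "j < n" for j
    proof -
      have "(i + j) mod n = k \<longleftrightarrow> int ((i + j) mod n) = int k"
        by (simp only: of_nat_eq_iff)
      also have "\<dots> \<longleftrightarrow> (int i + int j) mod int n = int k mod int n"
        using assms by (simp add: zmod_int)
      also have "\<dots> \<longleftrightarrow> int j mod int n = (int k - int i) mod int n"
        by (simp add: mod_eq_dvd_iff algebra_simps)
      also have "\<dots> \<longleftrightarrow> j = j0"
        using \<open>j < n\<close> unfolding j0_def by (auto simp: zmod_int)
      finally show ?thesis .
    qed
    then have "(\<Sum>j<n. if (i + j) mod n = k then u $ i * v $ j else 0)
        = (\<Sum>j<n. if j = j0 then u $ i * v $ j else 0)"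
      by (intro sum.cong) auto
    also have "\<dots> = u $ i * v $ j0"
      using \<open>j0 < n\<close> by simp
    finally show ?thesis
      unfolding j0_def gr_coeff_def .
  qed
  have "gr_mult n u v $ k = (\<Sum>i<n. \<Sum>j<n. if (i + j) mod n = k then u $ i * v $ j else 0)"
    unfolding gr_mult_def using assms by simp
  also have "\<dots> = (\<Sum>i<n. u $ i * gr_coeff n v (int k - int i))"
    by (rule sum.cong) (simp_all add: row_sum)
  finally show ?thesis .
qed

lemma gr_star_index:
  assumes "i < n"
  shows "gr_star n v $ i = gr_coeff n v (- int i)"
proof -
  have "int ((n - i) mod n) = (- int i) mod int n"
    using assms by (simp add: zmod_int of_nat_diff)
  then show ?thesis
    using assms unfolding gr_star_def gr_coeff_def by (metis index_vec nat_int)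
qed

lemma sigma_mat_add:
  assumes "u \<in> carrier_vec n" "v \<in> carrier_vec n"
  shows "sigma_mat n (u + v) = sigma_mat n u + sigma_mat n v"
  using assms by (intro eq_matI) (auto simp: sigma_mat_def)

lemma sigma_mat_gr_mult: "sigma_mat n (gr_mult n u v) = sigma_mat n u * sigma_mat n v"
proof (rule eq_matI)
  fix i j assume "i < dim_row (sigma_mat n u * sigma_mat n v)" "j < dim_col (sigma_mat n u * sigma_mat n v)"
  then have i: "i < n" and j: "j < n"
    by auto
  let ?u = "gr_coeff n u" and ?v = "gr_coeff n v"
  define p where "p = nat ((int j - int i) mod int n)"
  have p: "p < n" "int p mod int n = (int j - int i) mod int n"
    using i unfolding p_def by (auto simp: nat_less_iff)
  have "sigma_mat n (gr_mult n u v) $$ (i, j) = gr_mult n u v $ p"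
    using i j p unfolding p_def by (simp add: sigma_mat_index gr_coeff_def)
  also have "\<dots> = (\<Sum>m<n. ?u (int m) * ?v (int p - int m))"
    using p by (simp add: gr_mult_index)
  also have "\<dots> = (\<Sum>m<n. ?u (int m) * ?v (int j - int i - int m))"
    using p(2) by (intro sum.cong refl arg_cong2[where f = "(*)"] gr_coeff_mod_cong) (metis mod_diff_left_eq)
  also have "\<dots> = (\<Sum>m<n. (\<lambda>t. ?u (t - int i) * ?v (int j - t)) (int m + int i))"
    by (simp add: algebra_simps)
  also have "\<dots> = (\<Sum>k<n. ?u (int k - int i) * ?v (int j - int k))"
  proof (rule sum_lessThan_periodic_shift)
    fix t
    have "?u (t mod int n - int i) = ?u (t - int i)" "?v (int j - t mod int n) = ?v (int j - t)"
      by (intro gr_coeff_mod_cong; simp add: mod_diff_left_eq mod_diff_right_eq)+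
    then show "?u (t mod int n - int i) * ?v (int j - t mod int n) = ?u (t - int i) * ?v (int j - t)"
      by simp
  qed
  also have "\<dots> = (sigma_mat n u * sigma_mat n v) $$ (i, j)"
    using i j by (simp add: scalar_prod_def sigma_mat_index lessThan_atLeast0)
  finally show "sigma_mat n (gr_mult n u v) $$ (i, j) = (sigma_mat n u * sigma_mat n v) $$ (i, j)" .
qed auto

lemma sigma_mat_gr_star: "sigma_mat n (gr_star n v) = transpose_mat (sigma_mat n v)"
proof (rule eq_matI)
  fix i j assume "i < dim_row (transpose_mat (sigma_mat n v))" "j < dim_col (transpose_mat (sigma_mat n v))"
  then have i: "i < n" and j: "j < n"
    by auto
  define p where "p = nat ((int j - int i) mod int n)"
  have p: "p < n" "int p mod int n = (int j - int i) mod int n"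
    using i unfolding p_def by (auto simp: nat_less_iff)
  have "sigma_mat n (gr_star n v) $$ (i, j) = gr_star n v $ p"
    using i j p unfolding p_def by (simp add: sigma_mat_index gr_coeff_def)
  also have "\<dots> = gr_coeff n v (- int p)"
    using p by (simp add: gr_star_index)
  also have "\<dots> = gr_coeff n v (int i - int j)"
    using p(2) by (intro gr_coeff_mod_cong) (metis mod_minus_eq minus_diff_eq)
  finally show "sigma_mat n (gr_star n v) $$ (i, j) = transpose_mat (sigma_mat n v) $$ (i, j)"
    using i j by (simp add: sigma_mat_index)
qed auto

lemma sigma_mat_eq_iff:
  assumes "u \<in> carrier_vec n" "v \<in> carrier_vec n"
  shows "sigma_mat n u = sigma_mat n v \<longleftrightarrow> u = v"
proof
  assume eq: "sigma_mat n u = sigma_mat n v"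
  show "u = v"
  proof (rule eq_vecI)
    fix j assume "j < dim_vec v"
    then have "j < n"
      using assms by simp
    then show "u $ j = v $ j"
      using arg_cong[OF eq, of "\<lambda>M. M $$ (0, j)"] by (simp add: sigma_mat_index)
  qed (use assms in simp)
qed simp

lemma reverse_circulant_carrier: "reverse_circulant n A \<Longrightarrow> A \<in> carrier_mat n n"
  unfolding reverse_circulant_def by blast

lemma reverse_circulant_index_eq:
  assumes "reverse_circulant n A" "i < n" "j < n" "k < n" "l < n" "(i + j) mod n = (k + l) mod n"
  shows "A $$ (i, j) = A $$ (k, l)"
  using assms unfolding reverse_circulant_def by blast

lemma reverse_circulant_transpose:
  assumes A: "reverse_circulant n A"
  shows "transpose_mat A = A"
proof (rule eq_matI)
  fix i j assume "i < dim_row A" "j < dim_col A"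
  then have "i < n" "j < n"
    using reverse_circulant_carrier[OF A] by auto
  then show "transpose_mat A $$ (i, j) = A $$ (i, j)"
    using reverse_circulant_index_eq[OF A, of j i i j] reverse_circulant_carrier[OF A]
    by (simp add: add.commute)
qed (use reverse_circulant_carrier[OF A] in auto)

lemma reverse_circulant_index_shift:
  assumes A: "reverse_circulant n A" and "k < n" "i < n" "j < n"
  shows "A $$ (nat ((int k + (int i - int j)) mod int n), j) = A $$ (i, k)"
proof (rule reverse_circulant_index_eq[OF A])
  have "int ((nat ((int k + (int i - int j)) mod int n) + j) mod n)
      = ((int k + (int i - int j)) mod int n + int j) mod int n"
    using assms by (simp add: zmod_int)
  also have "\<dots> = (int i + int k) mod int n"
    unfolding mod_add_left_eq by (simp add: algebra_simps)
  also have "\<dots> = int ((i + k) mod n)"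
    by (simp add: zmod_int)
  finally show "(nat ((int k + (int i - int j)) mod int n) + j) mod n = (i + k) mod n"
    by (simp only: of_nat_eq_iff)
qed (use assms in \<open>auto simp: nat_less_iff\<close>)

lemma sigma_mat_mult_reverse_circulant:
  fixes A :: "'a::comm_semiring_0 mat"
  assumes A: "reverse_circulant n A"
  shows "sigma_mat n s * A = A * transpose_mat (sigma_mat n s)"
proof (rule eq_matI)
  have A_carrier: "A \<in> carrier_mat n n"
    using A by (rule reverse_circulant_carrier)
  fix i j assume "i < dim_row (A * transpose_mat (sigma_mat n s))" "j < dim_col (A * transpose_mat (sigma_mat n s))"
  then have i: "i < n" and j: "j < n"
    using A_carrier by auto
  let ?s = "gr_coeff n s" and ?A = "\<lambda>t. A $$ (nat (t mod int n), j)"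
  have "(sigma_mat n s * A) $$ (i, j) = (\<Sum>k<n. ?s (int k - int i) * ?A (int k))"
    using i j A_carrier by (simp add: scalar_prod_def sigma_mat_index lessThan_atLeast0 zmod_int)
  also have "\<dots> = (\<Sum>k<n. ?s (int k + (int i - int j) - int i) * ?A (int k + (int i - int j)))"
  proof (rule sum_lessThan_periodic_shift[symmetric])
    fix t
    have "?s (t mod int n - int i) = ?s (t - int i)"
      by (rule gr_coeff_mod_cong) (simp add: mod_diff_left_eq)
    then show "?s (t mod int n - int i) * ?A (t mod int n) = ?s (t - int i) * ?A t"
      by simp
  qed
  also have "\<dots> = (\<Sum>k<n. A $$ (i, k) * ?s (int k - int j))"
    using reverse_circulant_index_shift[OF A _ i j] by (intro sum.cong) (simp_all add: mult.commute)
  also have "\<dots> = (A * transpose_mat (sigma_mat n s)) $$ (i, j)"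
    using i j A_carrier by (simp add: scalar_prod_def sigma_mat_index lessThan_atLeast0)
  finally show "(sigma_mat n s * A) $$ (i, j) = (A * transpose_mat (sigma_mat n s)) $$ (i, j)" .
qed (use reverse_circulant_carrier[OF A] in auto)

section \<open>Symmetric block matrices in characteristic 2\<close>

lemma split_block_four_block_mat:
  assumes "X \<in> carrier_mat n1 m1" "Y \<in> carrier_mat n1 m2" "Z \<in> carrier_mat n2 m1" "W \<in> carrier_mat n2 m2"
  shows "split_block (four_block_mat X Y Z W) n1 m1 = (X, Y, Z, W)"
  using assms unfolding split_block_def Let_def by (auto intro!: eq_matI)

lemma four_block_mat_eq_iff:
  assumes "X \<in> carrier_mat n1 m1" "Y \<in> carrier_mat n1 m2" "Z \<in> carrier_mat n2 m1" "W \<in> carrier_mat n2 m2"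
    "X' \<in> carrier_mat n1 m1" "Y' \<in> carrier_mat n1 m2" "Z' \<in> carrier_mat n2 m1" "W' \<in> carrier_mat n2 m2"
  shows "four_block_mat X Y Z W = four_block_mat X' Y' Z' W' \<longleftrightarrow> X = X' \<and> Y = Y' \<and> Z = Z' \<and> W = W'"
proof
  assume "four_block_mat X Y Z W = four_block_mat X' Y' Z' W'"
  then have "split_block (four_block_mat X Y Z W) n1 m1 = split_block (four_block_mat X' Y' Z' W') n1 m1"
    by (rule arg_cong)
  then show "X = X' \<and> Y = Y' \<and> Z = Z' \<and> W = W'"
    unfolding split_block_four_block_mat[OF assms(1-4)] split_block_four_block_mat[OF assms(5-8)] by simp
qed simp

lemma four_block_mult_transpose_eq_minus_one_iff:
  fixes X Y :: "'a::comm_ring_1 mat"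
  assumes X: "X \<in> carrier_mat n n" and Y: "Y \<in> carrier_mat n n"
  shows "four_block_mat X Y Y X * transpose_mat (four_block_mat X Y Y X) = - 1\<^sub>m (n + n)
    \<longleftrightarrow> X * transpose_mat X + Y * transpose_mat Y = - 1\<^sub>m n
      \<and> X * transpose_mat Y + Y * transpose_mat X = 0\<^sub>m n n"
proof -
  let ?P = "X * transpose_mat X + Y * transpose_mat Y" and ?Q = "X * transpose_mat Y + Y * transpose_mat X"
  have "four_block_mat X Y Y X * transpose_mat (four_block_mat X Y Y X)
      = four_block_mat X Y Y X * four_block_mat (transpose_mat X) (transpose_mat Y) (transpose_mat Y) (transpose_mat X)"
    by (simp add: transpose_four_block_mat[OF X Y Y X])
  also have "\<dots> = four_block_mat ?P ?Q ?Q ?P"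
    using X Y by (simp add: mult_four_block_mat[OF X Y Y X, of _ n _ n] comm_add_mat[of _ n n])
  finally have gram: "four_block_mat X Y Y X * transpose_mat (four_block_mat X Y Y X) = four_block_mat ?P ?Q ?Q ?P" .
  have minus_one: "- 1\<^sub>m (n + n) = four_block_mat (- 1\<^sub>m n) (0\<^sub>m n n) (0\<^sub>m n n) (- 1\<^sub>m n :: 'a mat)"
    by (rule eq_matI) auto
  have "?P \<in> carrier_mat n n" "?Q \<in> carrier_mat n n"
    using X Y by auto
  from four_block_mat_eq_iff[OF this(1,2,2,1), of "- 1\<^sub>m n" "0\<^sub>m n n" "0\<^sub>m n n" "- 1\<^sub>m n"]
  show ?thesis
    unfolding gram minus_one by auto
qed

lemma add_self_char2:
  fixes x :: "'a::ring_1"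
  assumes "(2::'a) = 0"
  shows "x + x = 0"
  by (metis assms mult_2 mult_zero_left)

lemma add_eq_zero_iff_char2:
  fixes x y :: "'a::ring_1"
  assumes "(2::'a) = 0"
  shows "x + y = 0 \<longleftrightarrow> x = y"
  by (metis add_self_char2[OF assms] add_right_cancel)

lemma uminus_mat_char2:
  fixes X :: "'a::ring_1 mat"
  assumes "(2::'a) = 0"
  shows "- X = X"
  by (rule eq_matI) (auto simp: minus_unique add_self_char2[OF assms])

lemma add_mat_eq_zero_iff_char2:
  fixes X Y :: "'a::ring_1 mat"
  assumes "(2::'a) = 0" "X \<in> carrier_mat n m" "Y \<in> carrier_mat n m"
  shows "X + Y = 0\<^sub>m n m \<longleftrightarrow> X = Y"
  using assms(2,3) by (auto simp: mat_eq_iff add_eq_zero_iff_char2[OF assms(1)])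

lemma add_mult_transpose_add:
  fixes X Y :: "'a::comm_semiring_0 mat"
  assumes X: "X \<in> carrier_mat n m" and Y: "Y \<in> carrier_mat n m"
  shows "(X + Y) * transpose_mat (X + Y)
    = X * transpose_mat X + Y * transpose_mat Y + (X * transpose_mat Y + Y * transpose_mat X)"
proof -
  have "(X + Y) * transpose_mat (X + Y)
      = (X * transpose_mat X + Y * transpose_mat X) + (X * transpose_mat Y + Y * transpose_mat Y)"
    using X Y by (simp add: transpose_add add_mult_distrib_mat[of _ n m] mult_add_distrib_mat[of _ n m])
  also have "\<dots> = X * transpose_mat X + Y * transpose_mat Y + (X * transpose_mat Y + Y * transpose_mat X)"
    using X Y by (intro eq_matI) (simp_all add: ac_simps)
  finally show ?thesis .
qed

lemma mult_transpose_add_right: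
  fixes X Y Z :: "'a::comm_semiring_0 mat"
  assumes X: "X \<in> carrier_mat n m" and Y: "Y \<in> carrier_mat n m" and Z: "Z \<in> carrier_mat n m"
  shows "X * transpose_mat (Y + Z) + (Y + Z) * transpose_mat X
    = (X * transpose_mat Y + Y * transpose_mat X) + (X * transpose_mat Z + Z * transpose_mat X)"
proof -
  have "X * transpose_mat (Y + Z) + (Y + Z) * transpose_mat X
      = (X * transpose_mat Y + X * transpose_mat Z) + (Y * transpose_mat X + Z * transpose_mat X)"
    using X Y Z by (simp add: transpose_add add_mult_distrib_mat[of _ n m] mult_add_distrib_mat[of _ n m])
  also have "\<dots> = (X * transpose_mat Y + Y * transpose_mat X) + (X * transpose_mat Z + Z * transpose_mat X)"
    using X Y Z by (intro eq_matI) (simp_all add: ac_simps)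
  finally show ?thesis .
qed

lemma mult_transpose_add_eq_zero_char2:
  fixes X A :: "'a::comm_ring_1 mat"
  assumes "(2::'a) = 0" "X \<in> carrier_mat n n" "A \<in> carrier_mat n n"
    and "transpose_mat A = A" "X * A = A * transpose_mat X"
  shows "X * transpose_mat A + A * transpose_mat X = 0\<^sub>m n n"
  using assms by (simp add: add_mat_eq_zero_iff_char2)

lemma gram_conditions_char2:
  fixes S1 S2 A :: "'a::comm_ring_1 mat"
  assumes char2: "(2::'a) = 0"
    and S1: "S1 \<in> carrier_mat n n" and S2: "S2 \<in> carrier_mat n n" and A: "A \<in> carrier_mat n n"
    and A_sym: "transpose_mat A = A"
    and comm1: "S1 * A = A * transpose_mat S1" and comm2: "S2 * A = A * transpose_mat S2"
  shows "(S1 * transpose_mat S1 + (S2 + A) * transpose_mat (S2 + A) = - 1\<^sub>m n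
      \<and> S1 * transpose_mat (S2 + A) + (S2 + A) * transpose_mat S1 = 0\<^sub>m n n)
    \<longleftrightarrow> ((S1 + S2) * transpose_mat (S1 + S2) + A * A = 1\<^sub>m n \<and> S1 * transpose_mat S2 = S2 * transpose_mat S1)"
proof -
  define G where "G = S1 * transpose_mat S1 + S2 * transpose_mat S2"
  define Q where "Q = S1 * transpose_mat S2 + S2 * transpose_mat S1"
  have G: "G \<in> carrier_mat n n" and Q: "Q \<in> carrier_mat n n"
    unfolding G_def Q_def using S1 S2 by auto
  have "(S2 + A) * transpose_mat (S2 + A) = S2 * transpose_mat S2 + A * A + 0\<^sub>m n n"
    using add_mult_transpose_add[OF S2 A] mult_transpose_add_eq_zero_char2[OF char2 S2 A A_sym comm2] A_sym
    by simp
  then have diag: "S1 * transpose_mat S1 + (S2 + A) * transpose_mat (S2 + A) = G + A * A"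
    unfolding G_def using S1 S2 A by (simp add: assoc_add_mat[of _ n n])
  have off_diag: "S1 * transpose_mat (S2 + A) + (S2 + A) * transpose_mat S1 = Q"
    unfolding Q_def mult_transpose_add_right[OF S1 S2 A]
      mult_transpose_add_eq_zero_char2[OF char2 S1 A A_sym comm1]
    using S1 S2 by simp
  have sum: "(S1 + S2) * transpose_mat (S1 + S2) = G + Q"
    unfolding G_def Q_def by (rule add_mult_transpose_add[OF S1 S2])
  have "Q = 0\<^sub>m n n \<longleftrightarrow> S1 * transpose_mat S2 = S2 * transpose_mat S1"
    unfolding Q_def using S1 S2 by (intro add_mat_eq_zero_iff_char2[OF char2]) auto
  moreover have "G + Q = G" if "Q = 0\<^sub>m n n"
    using that G by simp
  ultimately show ?thesis
    unfolding diag off_diag sum uminus_mat_char2[OF char2] by auto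
qed

theorem mainTheorem7:
  fixes n :: nat and v1 v2 :: "'a::{comm_ring_1, finite} vec" and A :: "'a mat"
  assumes frob: "frobenius_ring TYPE('a)"
    and char2: "(2::'a) = 0"
    and n_pos: "n \<ge> 1"
    and v1: "v1 \<in> carrier_vec n" and v2: "v2 \<in> carrier_vec n"
    and neq: "v1 \<noteq> v2"
    and A: "reverse_circulant n A"
  shows "self_dual (4 * n) (code_gen (M_sigma n v1 v2 A)) \<longleftrightarrow>
    (sigma_mat n (gr_mult n (v1 + v2) (gr_star n (v1 + v2))) + A * A = 1\<^sub>m n \<and>
     gr_mult n v1 (gr_star n v2) = gr_mult n v2 (gr_star n v1))"
proof -
  define S1 S2 where "S1 = sigma_mat n v1" and "S2 = sigma_mat n v2"
  define B where "B = four_block_mat S1 (S2 + A) (S2 + A) S1"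
  have A_carrier: "A \<in> carrier_mat n n"
    using A by (rule reverse_circulant_carrier)
  have S: "S1 \<in> carrier_mat n n" "S2 \<in> carrier_mat n n"
    unfolding S1_def S2_def by simp_all
  have B: "B \<in> carrier_mat (n + n) (n + n)"
    unfolding B_def using S A_carrier by auto
  have M: "M_sigma n v1 v2 A = hconcat (1\<^sub>m (n + n)) B"
    unfolding M_sigma_def B_def S1_def S2_def by (simp add: mult_2)
  have four_n: "4 * n = (n + n) + (n + n)"
    by simp
  have "self_dual (4 * n) (code_gen (M_sigma n v1 v2 A)) \<longleftrightarrow> B * transpose_mat B = - 1\<^sub>m (n + n)"
    unfolding M four_n by (rule self_dual_hconcat_one_iff[OF B])
  also have "\<dots> \<longleftrightarrow> S1 * transpose_mat S1 + (S2 + A) * transpose_mat (S2 + A) = - 1\<^sub>m n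
      \<and> S1 * transpose_mat (S2 + A) + (S2 + A) * transpose_mat S1 = 0\<^sub>m n n"
    unfolding B_def using S A_carrier by (intro four_block_mult_transpose_eq_minus_one_iff) auto
  also have "\<dots> \<longleftrightarrow> (S1 + S2) * transpose_mat (S1 + S2) + A * A = 1\<^sub>m n
      \<and> S1 * transpose_mat S2 = S2 * transpose_mat S1"
    using char2 S A_carrier reverse_circulant_transpose[OF A] sigma_mat_mult_reverse_circulant[OF A]
    unfolding S1_def S2_def by (intro gram_conditions_char2) auto
  also have "\<dots> \<longleftrightarrow> sigma_mat n (gr_mult n (v1 + v2) (gr_star n (v1 + v2))) + A * A = 1\<^sub>m n
      \<and> gr_mult n v1 (gr_star n v2) = gr_mult n v2 (gr_star n v1)"
    using v1 v2 by (simp add: S1_def S2_def sigma_mat_gr_mult sigma_mat_gr_star sigma_mat_add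
        sigma_mat_eq_iff[OF gr_mult_carrier gr_mult_carrier, symmetric])
  finally show ?thesis .
qed

end
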